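(* Let $\mu$ be a singular cardinal, let $\vec{\mu}=\langle\mu_i:i<\operatorname{cf}(\mu)\rangle$ be an increasing sequence of regular cardinals cofinal in $\mu$, and let $\rho$ be a regular cardinal. Suppose $\vec f=\langle f_\nu:\nu<\rho\rangle$ is a sequence of functions in $\prod_{i<\operatorname{cf}(\mu)}\mu_i$ such that $(\vec\mu,\vec f)$ is a scale of length $\rho$ for $\mu$. Then $\rho\in\operatorname{spec}^*(A)$, where $A=\{\mu_i:i<\operatorname{cf}(\mu)\}$.
   Context: $(\vec\mu,\vec f)$ is a scale of length $\rho$ for $\mu$ if $\vec f$ is increasing and cofinal in $\prod_{i<\operatorname{cf}(\mu)}\mu_i$ modulo the ideal of bounded subsets of $\{\mu_i:i<\operatorname{cf}(\mu)\}$ (i.e., $f<g$ mod this ideal iff $f(\mu_i)<g(\mu_i)$ for all sufficiently large $i$). For a set $A$ of regular cardinals, $\prod A$ is the set of functions on $A$ with $f(a)\in a$; for $\mathcal{G}\subseteq\prod A$, $\operatorname{ub}(\mathcal{G})$ is the set of $a\in A$ with $\{f(a):f\in\mathcal{G}\}$ unbounded in $a$. $\operatorname{spec}^*(A)$ is the set of regular $\lambda$ such that there is $\mathcal{F}\subseteq\prod A$ of size $\lambda$ such that for every $\mathcal{F}_0\subseteq\mathcal{F}$ of size $\lambda$, $\operatorname{ub}(\mathcal{F}_0)$ is unbounded in $\sup(A)$. *)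

theory Defs
  imports Main "HOL-Library.Equipollence" "HOL-Library.FuncSet"
begin

text \<open>Ordinals are modelled as elements of an arbitrary well-ordered type 'o;
  the ordinal x is identified with its initial segment seg x.\<close>

definition seg :: "'o::wellorder \<Rightarrow> 'o set" where
  "seg x = {y. y < x}"

definition is_cardinal :: "'o::wellorder \<Rightarrow> bool" where
  "is_cardinal k \<longleftrightarrow> (\<forall>b<k. \<not> (seg b \<approx> seg k))"

definition cofinal_in :: "'o::wellorder set \<Rightarrow> 'o \<Rightarrow> bool" where
  "cofinal_in X k \<longleftrightarrow> X \<subseteq> seg k \<and> (\<forall>b<k. \<exists>x\<in>X. b \<le> x)"

definition regular_cardinal :: "'o::wellorder \<Rightarrow> bool" where
  "regular_cardinal k \<longleftrightarrow> is_cardinal k \<and> infinite (seg k) \<and>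
     (\<forall>X. cofinal_in X k \<longrightarrow> seg k \<lesssim> X)"

definition singular_cardinal :: "'o::wellorder \<Rightarrow> bool" where
  "singular_cardinal k \<longleftrightarrow> is_cardinal k \<and> infinite (seg k) \<and> \<not> regular_cardinal k"

definition cf :: "'o::wellorder \<Rightarrow> 'o" where
  "cf k = (LEAST t. \<exists>X. cofinal_in X k \<and> X \<approx> seg t)"

text \<open>Eventual domination modulo the ideal of bounded subsets of the index set seg th.\<close>
definition lt_mod_bd :: "'o::wellorder \<Rightarrow> ('o \<Rightarrow> 'o) \<Rightarrow> ('o \<Rightarrow> 'o) \<Rightarrow> bool" where
  "lt_mod_bd th f g \<longleftrightarrow> (\<exists>j<th. \<forall>i. j \<le> i \<and> i < th \<longrightarrow> f i < g i)"

definition prod_seq :: "'o::wellorder \<Rightarrow> ('o \<Rightarrow> 'o) \<Rightarrow> ('o \<Rightarrow> 'o) set" where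
  "prod_seq th m = Pi\<^sub>E (seg th) (\<lambda>i. seg (m i))"

definition is_scale :: "'o::wellorder \<Rightarrow> ('o \<Rightarrow> 'o) \<Rightarrow> 'o \<Rightarrow> ('o \<Rightarrow> 'o \<Rightarrow> 'o) \<Rightarrow> bool" where
  "is_scale mu m rho fs \<longleftrightarrow>
     (\<forall>v<rho. fs v \<in> prod_seq (cf mu) m) \<and>
     (\<forall>v w. v < w \<and> w < rho \<longrightarrow> lt_mod_bd (cf mu) (fs v) (fs w)) \<and>
     (\<forall>g\<in>prod_seq (cf mu) m. \<exists>v<rho. lt_mod_bd (cf mu) g (fs v))"

definition prodA :: "'o::wellorder set \<Rightarrow> ('o \<Rightarrow> 'o) set" where
  "prodA A = Pi\<^sub>E A seg"

definition ub :: "('o::wellorder \<Rightarrow> 'o) set \<Rightarrow> 'o set \<Rightarrow> 'o set" where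
  "ub G A = {a\<in>A. \<forall>b<a. \<exists>f\<in>G. b \<le> f a}"

definition unbounded_in_sup :: "'o::wellorder set \<Rightarrow> 'o set \<Rightarrow> bool" where
  "unbounded_in_sup X A \<longleftrightarrow> (\<forall>b. (\<exists>a\<in>A. b < a) \<longrightarrow> (\<exists>x\<in>X. b \<le> x))"

definition spec_star :: "'o::wellorder set \<Rightarrow> 'o set" where
  "spec_star A = {l. regular_cardinal l \<and>
     (\<exists>F. F \<subseteq> prodA A \<and> F \<approx> seg l \<and>
        (\<forall>F0. F0 \<subseteq> F \<and> F0 \<approx> seg l \<longrightarrow> unbounded_in_sup (ub F0 A) A))}"

end

theory Submission
  imports Defs
begin

text \<open>Transport the scale from the index set \<open>cf \<mu>\<close> to \<open>A = {\<mu>\<^sub>i}\<close>, where it is a family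
  of \<open>\<rho>\<close> distinct functions. If some \<open>\<rho>\<close>-sized subfamily had only boundedly many
  \<open>\<mu>\<^sub>i\<close> in its \<open>ub\<close>, then beyond that bound the subfamily would be pointwise bounded
  by some \<open>h \<in> \<Prod>\<^sub>i \<mu>\<^sub>i\<close>. As \<open>\<rho>\<close> is a cardinal, the subfamily's indices are cofinal in
  \<open>\<rho>\<close>, so it contains a member above the scale function that eventually dominates
  \<open>h\<close>, a contradiction.\<close>

lemma cardinal_eqpoll_subset_unbounded:
  assumes "is_cardinal k" and "X \<approx> seg k" and "v < k"
  shows "\<exists>w\<in>X. v \<le> w"
proof (rule ccontr)
  assume "\<not> (\<exists>w\<in>X. v \<le> w)"
  then have "X \<subseteq> seg v" by (auto simp: seg_def)
  then have "seg k \<lesssim> seg v"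
    using assms(2) eqpoll_sym lepoll_trans1 subset_imp_lepoll by blast
  moreover have "seg v \<lesssim> seg k"
    using assms(3) by (intro subset_imp_lepoll) (auto simp: seg_def)
  ultimately have "seg v \<approx> seg k" by (simp add: lepoll_antisym)
  then show False using assms(1,3) unfolding is_cardinal_def by blast
qed

lemma lt_mod_bd_trans:
  assumes "lt_mod_bd th f g" and "lt_mod_bd th g h"
  shows "lt_mod_bd th f h"
proof -
  obtain j1 where "j1 < th" "\<forall>i. j1 \<le> i \<and> i < th \<longrightarrow> f i < g i"
    using assms(1) unfolding lt_mod_bd_def by blast
  moreover obtain j2 where "j2 < th" "\<forall>i. j2 \<le> i \<and> i < th \<longrightarrow> g i < h i"
    using assms(2) unfolding lt_mod_bd_def by blast
  ultimately show ?thesis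
    unfolding lt_mod_bd_def by (intro exI[of _ "max j1 j2"]) (auto intro: less_trans)
qed

lemma scale_lt_mod_bd_mono:
  assumes "is_scale mu m rho fs" and "lt_mod_bd (cf mu) h (fs v)" and "v \<le> w" and "w < rho"
  shows "lt_mod_bd (cf mu) h (fs w)"
proof (cases "v = w")
  case False
  then have "lt_mod_bd (cf mu) (fs v) (fs w)"
    using assms(1,3,4) unfolding is_scale_def by simp
  then show ?thesis using assms(2) lt_mod_bd_trans by blast
qed (use assms(2) in simp)

lemma scale_image_subset_prod_seq:
  assumes "is_scale mu m rho fs"
  shows "fs ` seg rho \<subseteq> prod_seq (cf mu) m"
  using assms unfolding is_scale_def by (auto simp: seg_def)

lemma scale_inj_on:
  assumes "is_scale mu m rho fs"
  shows "inj_on fs (seg rho)"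
proof -
  have "fs v \<noteq> fs w" if "v < w" "w < rho" for v w
  proof -
    have "lt_mod_bd (cf mu) (fs v) (fs w)"
      using assms that unfolding is_scale_def by blast
    then obtain j where "j < cf mu" "fs v j < fs w j"
      unfolding lt_mod_bd_def by blast
    then show ?thesis by auto
  qed
  then show ?thesis
    unfolding inj_on_def seg_def by (metis linorder_neqE mem_Collect_eq)
qed

lemma scale_cofinal_subfamily_unbounded:
  assumes scale: "is_scale mu m rho fs"
    and nonempty: "\<forall>i<cf mu. seg (m i) \<noteq> {}"
    and I: "I \<subseteq> seg rho" "\<forall>v<rho. \<exists>w\<in>I. v \<le> w"
    and "j < cf mu"
  shows "\<exists>i. j \<le> i \<and> i < cf mu \<and> (\<forall>c<m i. \<exists>w\<in>I. c \<le> fs w i)"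
proof (rule ccontr)
  assume "\<not> ?thesis"
  then have "\<exists>c<m i. \<forall>w\<in>I. fs w i < c" if "j \<le> i" "i < cf mu" for i
    using that by (auto simp: not_le)
  then obtain c where c: "\<And>i. j \<le> i \<Longrightarrow> i < cf mu \<Longrightarrow> c i < m i \<and> (\<forall>w\<in>I. fs w i < c i)"
    by metis
  define h where
    "h = restrict (\<lambda>i. if j \<le> i then c i else (SOME y. y < m i)) (seg (cf mu))"
  have "(SOME y. y < m i) < m i" if "i < cf mu" for i
  proof -
    have "\<exists>y. y < m i" using nonempty that by (auto simp: seg_def)
    then show ?thesis by (rule someI_ex)
  qed
  then have "h \<in> prod_seq (cf mu) m"
    unfolding prod_seq_def h_def using c by (auto simp: seg_def)
  then obtain v where v: "v < rho" "lt_mod_bd (cf mu) h (fs v)"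
    using scale unfolding is_scale_def by blast
  obtain w where w: "w \<in> I" "v \<le> w"
    using I(2) v(1) by blast
  then have "lt_mod_bd (cf mu) h (fs w)"
    using scale_lt_mod_bd_mono[OF scale v(2)] I(1) by (auto simp: seg_def)
  then obtain k where k: "k < cf mu" "\<forall>i. k \<le> i \<and> i < cf mu \<longrightarrow> h i < fs w i"
    unfolding lt_mod_bd_def by blast
  define i where "i = max j k"
  have "i < cf mu" "j \<le> i" "k \<le> i"
    using k(1) \<open>j < cf mu\<close> by (auto simp: i_def)
  then have "c i < fs w i" and "fs w i < c i"
    using k(2) c w(1) by (auto simp: h_def seg_def)
  then show False by simp
qed

definition on_image :: "'o::wellorder \<Rightarrow> ('o \<Rightarrow> 'o) \<Rightarrow> ('o \<Rightarrow> 'o) \<Rightarrow> 'o \<Rightarrow> 'o" where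
  "on_image th m f = restrict (f \<circ> inv_into (seg th) m) (m ` seg th)"

lemma on_image_apply:
  assumes "inj_on m (seg th)" and "i < th"
  shows "on_image th m f (m i) = f i"
  using assms by (simp add: on_image_def seg_def)

lemma on_image_in_prodA:
  assumes "inj_on m (seg th)" and "f \<in> prod_seq th m"
  shows "on_image th m f \<in> prodA (m ` seg th)"
  using assms unfolding prodA_def prod_seq_def by (auto simp: on_image_apply on_image_def seg_def)

lemma inj_on_on_image:
  assumes "inj_on m (seg th)"
  shows "inj_on (on_image th m) (prod_seq th m)"
proof (rule inj_onI)
  fix f g assume "f \<in> prod_seq th m" "g \<in> prod_seq th m" "on_image th m f = on_image th m g"
  then show "f = g"
    using on_image_apply[OF assms] unfolding prod_seq_def
    by (metis PiE_ext mem_Collect_eq seg_def)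
qed

lemma scale_on_image_inj_on:
  assumes "is_scale mu m rho fs" and "inj_on m (seg (cf mu))"
  shows "inj_on (on_image (cf mu) m \<circ> fs) (seg rho)"
proof (rule comp_inj_on)
  show "inj_on fs (seg rho)" using assms(1) by (rule scale_inj_on)
  show "inj_on (on_image (cf mu) m) (fs ` seg rho)"
    using inj_on_on_image[OF assms(2)] scale_image_subset_prod_seq[OF assms(1)]
    by (rule inj_on_subset)
qed

lemma scale_on_image_subfamily_unbounded:
  assumes scale: "is_scale mu m rho fs"
    and mono: "strict_mono_on (seg (cf mu)) m"
    and nonempty: "\<forall>i<cf mu. seg (m i) \<noteq> {}"
    and "is_cardinal rho"
    and F0: "F0 \<subseteq> (on_image (cf mu) m \<circ> fs) ` seg rho" "F0 \<approx> seg rho"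
  shows "unbounded_in_sup (ub F0 (m ` seg (cf mu))) (m ` seg (cf mu))"
  unfolding unbounded_in_sup_def
proof (intro allI impI)
  fix b assume "\<exists>a\<in>m ` seg (cf mu). b < a"
  then obtain j where j: "j < cf mu" "b < m j" by (auto simp: seg_def)
  let ?g = "on_image (cf mu) m \<circ> fs"
  define I where "I = {v \<in> seg rho. ?g v \<in> F0}"
  have inj_m: "inj_on m (seg (cf mu))"
    using mono strict_mono_on_imp_inj_on by blast
  have "?g ` I = F0"
    using F0(1) unfolding I_def by blast
  moreover have "inj_on ?g I"
    using scale_on_image_inj_on[OF scale inj_m] by (rule inj_on_subset) (simp add: I_def)
  ultimately have "I \<approx> seg rho"
    using F0(2) inj_on_image_eqpoll_self eqpoll_sym eqpoll_trans by metis
  then have "\<forall>v<rho. \<exists>w\<in>I. v \<le> w"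
    using \<open>is_cardinal rho\<close> cardinal_eqpoll_subset_unbounded by blast
  moreover have "I \<subseteq> seg rho"
    by (simp add: I_def)
  ultimately obtain i where i: "j \<le> i" "i < cf mu" "\<forall>c<m i. \<exists>w\<in>I. c \<le> fs w i"
    using scale_cofinal_subfamily_unbounded[OF scale nonempty] j(1) by blast
  have "m i \<in> ub F0 (m ` seg (cf mu))"
    unfolding ub_def
  proof (intro CollectI conjI allI impI)
    show "m i \<in> m ` seg (cf mu)" using i(2) by (simp add: seg_def)
    fix c assume "c < m i"
    then obtain w where "w \<in> I" "c \<le> fs w i" using i(3) by blast
    then show "\<exists>f\<in>F0. c \<le> f (m i)"
      using on_image_apply[OF inj_m i(2)] unfolding I_def by (metis comp_apply mem_Collect_eq)
  qed
  moreover have "m j \<le> m i"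
    using mono i(1,2) j(1) unfolding strict_mono_on_def seg_def
    by (metis le_less mem_Collect_eq)
  ultimately show "\<exists>x\<in>ub F0 (m ` seg (cf mu)). b \<le> x"
    using j(2) by (intro bexI[of _ "m i"]) auto
qed

theorem lemma5p5:
  fixes mu rho :: "'o::wellorder" and m :: "'o \<Rightarrow> 'o" and fs :: "'o \<Rightarrow> 'o \<Rightarrow> 'o"
  assumes "singular_cardinal mu"
    and "strict_mono_on (seg (cf mu)) m"
    and "\<forall>i<cf mu. regular_cardinal (m i) \<and> m i < mu"
    and "cofinal_in (m ` seg (cf mu)) mu"
    and "regular_cardinal rho"
    and "is_scale mu m rho fs"
  shows "rho \<in> spec_star (m ` seg (cf mu))"
proof -
  let ?F = "(on_image (cf mu) m \<circ> fs) ` seg rho"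
  have inj_m: "inj_on m (seg (cf mu))"
    using assms(2) strict_mono_on_imp_inj_on by blast
  have nonempty: "\<forall>i<cf mu. seg (m i) \<noteq> {}"
    using assms(3) unfolding regular_cardinal_def by force
  have "?F \<subseteq> prodA (m ` seg (cf mu))"
    using scale_image_subset_prod_seq[OF assms(6)] on_image_in_prodA[OF inj_m] by auto
  moreover have "?F \<approx> seg rho"
    using scale_on_image_inj_on[OF assms(6) inj_m] by (rule inj_on_image_eqpoll_self)
  moreover have "is_cardinal rho"
    using assms(5) unfolding regular_cardinal_def by blast
  ultimately show ?thesis
    unfolding spec_star_def
    using assms(5) scale_on_image_subfamily_unbounded[OF assms(6,2) nonempty] by blast
qed

end
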